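(* Let $n\ge n'\ge 1$, let $p_1,\dots,p_n\ge 0$, and let $x_1,\dots,x_n$ and $x_{\{j\}\cup\{j'\}}$ ($j,j'\in\{1,\dots,n\}$) be reals with $x_{\{j\}\cup\{j'\}}=x_{\{j'\}\cup\{j\}}\ge 0$, $x_{\{j\}\cup\{j\}}=x_j\ge 0$, such that the $(n+1)\times(n+1)$ matrix $X$ indexed by $0,1,\dots,n$ with $X_{0,0}=1$, $X_{0,j}=X_{j,0}=x_j$, $X_{j,j'}=x_{\{j\}\cup\{j'\}}$ is positive semidefinite. Then for every subset $S\subseteq\{1,\dots,n'\}$, $$\sum_{j=1}^{n'}p_j\big(p_1x_{\{j\}\cup\{1\}}+\dots+p_jx_{\{j\}\cup\{j\}}\big)\ \ge\ \sum_{j\in\{1,\dots,n'\}\setminus S}x_jp_j^2+\frac12\Big(\sum_{j\in S}x_jp_j^2+\Big(\sum_{j\in S}x_jp_j\Big)^2\Big).$$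
   Context: This is the per-machine form of the constraints of the SDP relaxation: for a fixed machine $i$, $x_j$ stands for $x_{ij}$, $x_{\{j\}\cup\{j'\}}$ for $x_{\{ij\}\cup\{ij'\}}$, $p_j$ for $p_{ij}$, and $X$ is the moment matrix $X^{(i)}$. *)

theory Defs
  imports "HOL-Analysis.Analysis"
begin

definition psd_mat :: "nat \<Rightarrow> (nat \<Rightarrow> nat \<Rightarrow> real) \<Rightarrow> bool" where
  "psd_mat n X \<longleftrightarrow>
     (\<forall>i\<in>{0..n}. \<forall>j\<in>{0..n}. X i j = X j i) \<and>
     (\<forall>v :: nat \<Rightarrow> real. (\<Sum>i\<in>{0..n}. \<Sum>j\<in>{0..n}. v i * X i j * v j) \<ge> 0)"

definition moment_mat :: "(nat \<Rightarrow> real) \<Rightarrow> (nat \<Rightarrow> nat \<Rightarrow> real) \<Rightarrow> nat \<Rightarrow> nat \<Rightarrow> real" where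
  "moment_mat x y i j =
     (if i = 0 \<and> j = 0 then 1 else if i = 0 then x j else if j = 0 then x i else y i j)"

end

theory Submission
  imports Defs
begin

text \<open>Testing the moment matrix against the vector \<open>(-t, w)\<close> with \<open>t = \<Sum> x\<^sub>j w\<^sub>j\<close>
  gives \<open>t\<^sup>2 \<le> w\<^sup>T Y w\<close>. Doubling the lower-triangular sum of the symmetric \<open>p\<^sub>j p\<^sub>k y\<^sub>j\<^sub>k\<close>
  yields the diagonal plus the full double sum; dropping the nonnegative off-block terms of
  the full sum leaves the \<open>S \<times> S\<close> block, bounded below by \<open>(\<Sum>\<^sub>S x\<^sub>j p\<^sub>j)\<^sup>2\<close>, plus the
  diagonal outside \<open>S\<close>.\<close>

lemma sum_lower_triangle_symmetric:
  fixes a :: "nat \<Rightarrow> nat \<Rightarrow> 'a::comm_semiring_1"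
  assumes "\<And>j k. j \<in> {1..m} \<Longrightarrow> k \<in> {1..m} \<Longrightarrow> a j k = a k j"
  shows "2 * (\<Sum>j=1..m. \<Sum>k=1..j. a j k) = (\<Sum>j=1..m. a j j) + (\<Sum>j=1..m. \<Sum>k=1..m. a j k)"
  using assms
proof (induction m)
  case 0
  then show ?case by simp
next
  case (Suc m)
  let ?l = "Suc m"
  have IH: "2 * (\<Sum>j=1..m. \<Sum>k=1..j. a j k) = (\<Sum>j=1..m. a j j) + (\<Sum>j=1..m. \<Sum>k=1..m. a j k)"
    using Suc by simp
  have column_row: "(\<Sum>j=1..m. a j ?l) = (\<Sum>k=1..m. a ?l k)"
    by (rule sum.cong) (use Suc.prems in auto)
  have "(\<Sum>j=1..?l. \<Sum>k=1..?l. a j k)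
      = (\<Sum>j=1..m. \<Sum>k=1..m. a j k) + (\<Sum>j=1..m. a j ?l) + (\<Sum>k=1..m. a ?l k) + a ?l ?l"
    by (simp add: sum.distrib add_ac)
  then show ?case
    using IH column_row by (simp add: distrib_left mult_2 add_ac)
qed

lemma moment_mat_quadratic_form:
  "(\<Sum>i\<in>{0..n}. \<Sum>j\<in>{0..n}. v i * moment_mat x y i j * v j)
     = (v 0)\<^sup>2 + 2 * v 0 * (\<Sum>j=1..n. x j * v j) + (\<Sum>j=1..n. \<Sum>k=1..n. v j * y j k * v k)"
proof -
  have split0: "\<And>g. (\<Sum>i\<in>{0..n}. g i) = g 0 + (\<Sum>i=1..n. g i)"
    by (simp add: sum.atLeast_Suc_atMost)
  have row: "(\<Sum>j\<in>{0..n}. v i * moment_mat x y i j * v j)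
      = v i * x i * v 0 + (\<Sum>k=1..n. v i * y i k * v k)" if "i \<in> {1..n}" for i
    using that by (simp add: split0 moment_mat_def)
  have "(\<Sum>i=1..n. \<Sum>j\<in>{0..n}. v i * moment_mat x y i j * v j)
      = (\<Sum>i=1..n. v i * x i * v 0 + (\<Sum>k=1..n. v i * y i k * v k))"
    by (rule sum.cong) (simp_all add: row)
  also have "\<dots> = v 0 * (\<Sum>j=1..n. x j * v j) + (\<Sum>j=1..n. \<Sum>k=1..n. v j * y j k * v k)"
    by (simp add: sum.distrib sum_distrib_left mult_ac)
  finally have "(\<Sum>i=1..n. \<Sum>j\<in>{0..n}. v i * moment_mat x y i j * v j)
      = v 0 * (\<Sum>j=1..n. x j * v j) + (\<Sum>j=1..n. \<Sum>k=1..n. v j * y j k * v k)" .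
  moreover have "(\<Sum>j\<in>{0..n}. v 0 * moment_mat x y 0 j * v j)
      = (v 0)\<^sup>2 + v 0 * (\<Sum>j=1..n. x j * v j)"
    by (simp add: split0 moment_mat_def power2_eq_square sum_distrib_left mult_ac)
  ultimately show ?thesis
    by (simp add: split0)
qed

lemma psd_moment_mat_sum_sq_le:
  assumes "psd_mat n (moment_mat x y)"
  shows "(\<Sum>j=1..n. x j * w j)\<^sup>2 \<le> (\<Sum>j=1..n. \<Sum>k=1..n. w j * y j k * w k)"
proof -
  define t where "t = (\<Sum>j=1..n. x j * w j)"
  define v where "v = (\<lambda>i. if i = 0 then - t else w i)"
  define Q where "Q = (\<Sum>j=1..n. \<Sum>k=1..n. w j * y j k * w k)"
  have v_eq_w: "v j = w j" if "j \<in> {1..n}" for j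
    using that by (simp add: v_def)
  have "(\<Sum>j=1..n. x j * v j) = t"
    unfolding t_def by (rule sum.cong) (simp_all add: v_eq_w)
  moreover have "(\<Sum>j=1..n. \<Sum>k=1..n. v j * y j k * v k) = Q"
    unfolding Q_def by (intro sum.cong) (simp_all add: v_eq_w)
  moreover have "0 \<le> (\<Sum>i\<in>{0..n}. \<Sum>j\<in>{0..n}. v i * moment_mat x y i j * v j)"
    using assms unfolding psd_mat_def by blast
  ultimately have "0 \<le> Q - t\<^sup>2"
    by (simp add: moment_mat_quadratic_form v_def power2_eq_square)
  then show ?thesis
    by (simp add: t_def Q_def)
qed

lemma psd_moment_mat_subset_sum_sq_le:
  assumes "psd_mat n (moment_mat x y)" and "T \<subseteq> {1..n}"
  shows "(\<Sum>j\<in>T. x j * w j)\<^sup>2 \<le> (\<Sum>j\<in>T. \<Sum>k\<in>T. w j * y j k * w k)"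
proof -
  define w' where "w' = (\<lambda>j. if j \<in> T then w j else 0)"
  have restrict: "(\<Sum>j=1..n. g j * w' j) = (\<Sum>j\<in>T. g j * w j)" for g :: "nat \<Rightarrow> real"
  proof -
    have "(\<Sum>j=1..n. g j * w' j) = (\<Sum>j=1..n. if j \<in> T then g j * w j else 0)"
      by (rule sum.cong) (simp_all add: w'_def)
    also have "\<dots> = (\<Sum>j\<in>T. g j * w j)"
      using assms(2) by (simp add: sum.inter_restrict[symmetric] Int_absorb1)
    finally show ?thesis .
  qed
  have "(\<Sum>j=1..n. \<Sum>k=1..n. w' j * y j k * w' k) = (\<Sum>j=1..n. (\<Sum>k=1..n. y j k * w' k) * w' j)"
    by (simp add: sum_distrib_left sum_distrib_right mult_ac)
  also have "\<dots> = (\<Sum>j\<in>T. (\<Sum>k\<in>T. y j k * w k) * w j)"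
    by (simp only: restrict)
  also have "\<dots> = (\<Sum>j\<in>T. \<Sum>k\<in>T. w j * y j k * w k)"
    by (simp add: sum_distrib_left sum_distrib_right mult_ac)
  finally show ?thesis
    using psd_moment_mat_sum_sq_le[OF assms(1), of w'] restrict[of x] by simp
qed

lemma double_sum_ge_block_plus_diagonal:
  fixes a :: "'b \<Rightarrow> 'b \<Rightarrow> 'a::ordered_comm_monoid_add"
  assumes "finite A" and "S \<subseteq> A" and "\<And>j k. j \<in> A \<Longrightarrow> k \<in> A \<Longrightarrow> 0 \<le> a j k"
  shows "(\<Sum>j\<in>S. \<Sum>k\<in>S. a j k) + (\<Sum>j\<in>A - S. a j j) \<le> (\<Sum>j\<in>A. \<Sum>k\<in>A. a j k)"
proof -
  have "(\<Sum>j\<in>S. \<Sum>k\<in>S. a j k) \<le> (\<Sum>j\<in>S. \<Sum>k\<in>A. a j k)"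
    by (rule sum_mono, rule sum_mono2) (use assms in auto)
  moreover have "(\<Sum>j\<in>A - S. a j j) \<le> (\<Sum>j\<in>A - S. \<Sum>k\<in>A. a j k)"
    by (rule sum_mono) (use assms in \<open>auto simp: sum.remove intro!: add_increasing2 sum_nonneg\<close>)
  ultimately show ?thesis
    using sum.subset_diff[OF assms(2,1), of "\<lambda>j. \<Sum>k\<in>A. a j k"]
    by (simp add: add_mono add.commute)
qed

theorem lemma1:
  fixes n n' :: nat and p x :: "nat \<Rightarrow> real" and y :: "nat \<Rightarrow> nat \<Rightarrow> real"
    and S :: "nat set"
  assumes "1 \<le> n'" and "n' \<le> n"
    and "\<forall>j\<in>{1..n}. p j \<ge> 0"
    and "\<forall>j\<in>{1..n}. \<forall>j'\<in>{1..n}. y j j' = y j' j \<and> y j j' \<ge> 0"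
    and "\<forall>j\<in>{1..n}. y j j = x j \<and> x j \<ge> 0"
    and "psd_mat n (moment_mat x y)"
    and "S \<subseteq> {1..n'}"
  shows "(\<Sum>j=1..n'. p j * (\<Sum>k=1..j. p k * y j k))
         \<ge> (\<Sum>j\<in>{1..n'} - S. x j * (p j)^2)
           + (1/2) * ((\<Sum>j\<in>S. x j * (p j)^2) + (\<Sum>j\<in>S. x j * p j)^2)"
proof -
  define A where "A = {1..n'}"
  define a where "a = (\<lambda>j k. p j * p k * y j k)"
  have A_sub: "A \<subseteq> {1..n}" and S_sub: "S \<subseteq> {1..n}"
    using assms(2,7) by (auto simp: A_def)
  have diag: "(\<Sum>j\<in>B. a j j) = (\<Sum>j\<in>B. x j * (p j)\<^sup>2)" if "B \<subseteq> A" for B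
    using that A_sub assms(5) by (intro sum.cong) (auto simp: a_def power2_eq_square)
  have "2 * (\<Sum>j=1..n'. p j * (\<Sum>k=1..j. p k * y j k))
      = (\<Sum>j\<in>A. x j * (p j)\<^sup>2) + (\<Sum>j\<in>A. \<Sum>k\<in>A. a j k)"
    using sum_lower_triangle_symmetric[of n' a] A_sub assms(4) diag[of A]
    by (auto simp: A_def a_def sum_distrib_left mult_ac)
  moreover have "(\<Sum>j\<in>S. x j * p j)\<^sup>2 + (\<Sum>j\<in>A - S. x j * (p j)\<^sup>2) \<le> (\<Sum>j\<in>A. \<Sum>k\<in>A. a j k)"
    using psd_moment_mat_subset_sum_sq_le[OF assms(6) S_sub, of p]
      double_sum_ge_block_plus_diagonal[of A S a] diag[of "A - S"] assms(3,4,7) A_sub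
    by (fastforce simp: A_def a_def mult_ac)
  moreover have "(\<Sum>j\<in>A. x j * (p j)\<^sup>2) = (\<Sum>j\<in>S. x j * (p j)\<^sup>2) + (\<Sum>j\<in>A - S. x j * (p j)\<^sup>2)"
    using sum.subset_diff[OF assms(7) finite_atLeastAtMost] by (simp add: A_def add.commute)
  ultimately show ?thesis
    unfolding A_def distrib_left by linarith
qed

end
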